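(* Let $\mathcal B$ be \textsc{AlternatingOracle}. Then for every input $(\sigma,\omega)$ and every realization of its random choices, $$\mathrm{OBJ}_{\mathcal B}\le3\cdot\mathrm{OPT}+3\eta.$$
   Context: Caching with predictions. A cache of capacity $k$ starts empty; requests $\sigma(1),\dots,\sigma(T)$ are processed online; $\nu(t)=\min\{s>t:\sigma(s)=\sigma(t)\}$ ($T+1$ if none); with request $t$ the algorithm receives a prediction $\omega(t)$ of $\nu(t)$; $\eta=\sum_{t=1}^T|\nu(t)-\omega(t)|$. On a hit nothing happens; on a miss the page is loaded, and if the cache is full one cached page is first evicted. $\mathrm{OBJ}_{\mathcal Q}$ is the number of misses of $\mathcal Q$; $\mathrm{OPT}$ is the number of misses of Belady's optimal offline algorithm. Cached pages are identified by the index of their most recent request: $\mathcal I(t)$ is the set of indices $\max\{t'\le t:\sigma(t')=s\}$ over cached pages $s$ after request $t$. \textsc{AlternatingOracle}: on a miss with full cache at time $t$ one of three rules evicts a page: BlindOracle (evict cached $\sigma(i)$, $i\in\mathcal I(t-1)$, with maximal $\omega(i)$); RandomAlg (evict a uniformly random cached page); Corrector (with $W=\{i\in\mathcal I(t-1):\omega(i)<t\}$, evict $\sigma(i)$, $i\in W$, with minimal $\omega(i)$ if $W\ne\emptyset$, otherwise evict as BlindOracle). If $\sigma(t)$ was never requested before, BlindOracle is used; otherwise, if the most recent eviction of page $\sigma(t)$ used BlindOracle / RandomAlg / Corrector, then at time $t$ RandomAlg / Corrector / BlindOracle is used, respectively. *)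

theory Defs
  imports Main
begin

text \<open>Requests are sigma 1, ..., sigma T (pages of type 'a); predictions omega t :: nat.
  Cache contents are represented as the set of cached pages C t after request t (C 0 = {}).\<close>

definition next_req :: "(nat \<Rightarrow> 'a) \<Rightarrow> nat \<Rightarrow> nat \<Rightarrow> nat" where
  "next_req \<sigma> T t =
     (if \<exists>s. t < s \<and> s \<le> T \<and> \<sigma> s = \<sigma> t
      then (LEAST s. t < s \<and> s \<le> T \<and> \<sigma> s = \<sigma> t) else T + 1)"

definition pred_error :: "(nat \<Rightarrow> 'a) \<Rightarrow> (nat \<Rightarrow> nat) \<Rightarrow> nat \<Rightarrow> int" where
  "pred_error \<sigma> \<omega> T = (\<Sum>t = 1..T. \<bar>int (next_req \<sigma> T t) - int (\<omega> t)\<bar>)"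

text \<open>Index of the most recent request of page p among requests 1..t
  (the element of I(t) identifying the cached page p).\<close>
definition last_req :: "(nat \<Rightarrow> 'a) \<Rightarrow> nat \<Rightarrow> 'a \<Rightarrow> nat" where
  "last_req \<sigma> t p = Max {i \<in> {1..t}. \<sigma> i = p}"

definition misses :: "(nat \<Rightarrow> 'a) \<Rightarrow> nat \<Rightarrow> (nat \<Rightarrow> 'a set) \<Rightarrow> nat" where
  "misses \<sigma> T C = card {t \<in> {1..T}. \<sigma> t \<notin> C (t - 1)}"

definition feasible_run :: "nat \<Rightarrow> (nat \<Rightarrow> 'a) \<Rightarrow> nat \<Rightarrow> (nat \<Rightarrow> 'a set) \<Rightarrow> bool" where
  "feasible_run k \<sigma> T C \<longleftrightarrow> C 0 = {} \<and>
     (\<forall>t \<in> {1..T}.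
        (\<sigma> t \<in> C (t - 1) \<longrightarrow> C t = C (t - 1)) \<and>
        (\<sigma> t \<notin> C (t - 1) \<and> card (C (t - 1)) < k \<longrightarrow> C t = insert (\<sigma> t) (C (t - 1))) \<and>
        (\<sigma> t \<notin> C (t - 1) \<and> k \<le> card (C (t - 1)) \<longrightarrow>
           (\<exists>p \<in> C (t - 1). C t = insert (\<sigma> t) (C (t - 1) - {p}))))"

text \<open>OPT: the number of misses of Belady's optimal offline algorithm, i.e. the minimum
  number of misses over all feasible runs.\<close>
definition OPT :: "nat \<Rightarrow> (nat \<Rightarrow> 'a) \<Rightarrow> nat \<Rightarrow> nat" where
  "OPT k \<sigma> T = (LEAST m. \<exists>C. feasible_run k \<sigma> T C \<and> misses \<sigma> T C = m)"

datatype rule = BlindOracle | RandomAlg | Corrector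

fun next_rule :: "rule \<Rightarrow> rule" where
  "next_rule BlindOracle = RandomAlg"
| "next_rule RandomAlg = Corrector"
| "next_rule Corrector = BlindOracle"

definition blind_evicts :: "(nat \<Rightarrow> 'a) \<Rightarrow> (nat \<Rightarrow> nat) \<Rightarrow> 'a set \<Rightarrow> nat \<Rightarrow> 'a \<Rightarrow> bool" where
  "blind_evicts \<sigma> \<omega> S t p \<longleftrightarrow> p \<in> S \<and>
     (\<forall>q \<in> S. \<omega> (last_req \<sigma> (t - 1) q) \<le> \<omega> (last_req \<sigma> (t - 1) p))"

definition corrector_evicts :: "(nat \<Rightarrow> 'a) \<Rightarrow> (nat \<Rightarrow> nat) \<Rightarrow> 'a set \<Rightarrow> nat \<Rightarrow> 'a \<Rightarrow> bool" where
  "corrector_evicts \<sigma> \<omega> S t p \<longleftrightarrow>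
     (let W = {q \<in> S. \<omega> (last_req \<sigma> (t - 1) q) < t} in
      if W \<noteq> {} then p \<in> W \<and> (\<forall>q \<in> W. \<omega> (last_req \<sigma> (t - 1) p) \<le> \<omega> (last_req \<sigma> (t - 1) q))
      else blind_evicts \<sigma> \<omega> S t p)"

text \<open>RandomAlg: any realization of the uniformly random choice, i.e. any cached page.\<close>
fun rule_evicts :: "rule \<Rightarrow> (nat \<Rightarrow> 'a) \<Rightarrow> (nat \<Rightarrow> nat) \<Rightarrow> 'a set \<Rightarrow> nat \<Rightarrow> 'a \<Rightarrow> bool" where
  "rule_evicts BlindOracle \<sigma> \<omega> S t p = blind_evicts \<sigma> \<omega> S t p"
| "rule_evicts RandomAlg \<sigma> \<omega> S t p = (p \<in> S)"
| "rule_evicts Corrector \<sigma> \<omega> S t p = corrector_evicts \<sigma> \<omega> S t p"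

text \<open>Rule used at time t: BlindOracle if sigma t was never requested before; otherwise the
  successor of the rule used for the most recent eviction of page sigma t.
  ev e = Some p records that page p was evicted at time e, rl e the rule used then.\<close>
definition chosen_rule :: "(nat \<Rightarrow> 'a) \<Rightarrow> (nat \<Rightarrow> 'a option) \<Rightarrow> (nat \<Rightarrow> rule) \<Rightarrow> nat \<Rightarrow> rule" where
  "chosen_rule \<sigma> ev rl t =
     (if \<not> (\<exists>i \<in> {1..<t}. \<sigma> i = \<sigma> t) then BlindOracle
      else next_rule (rl (Max {e \<in> {1..<t}. ev e = Some (\<sigma> t)})))"

text \<open>A run (realization) of AlternatingOracle, with all ties and random choices arbitrary.\<close>
definition alt_oracle_run :: "nat \<Rightarrow> (nat \<Rightarrow> 'a) \<Rightarrow> (nat \<Rightarrow> nat) \<Rightarrow> nat \<Rightarrow>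
    (nat \<Rightarrow> 'a set) \<Rightarrow> (nat \<Rightarrow> 'a option) \<Rightarrow> (nat \<Rightarrow> rule) \<Rightarrow> bool" where
  "alt_oracle_run k \<sigma> \<omega> T C ev rl \<longleftrightarrow> C 0 = {} \<and>
     (\<forall>t \<in> {1..T}.
        (\<sigma> t \<in> C (t - 1) \<longrightarrow> C t = C (t - 1) \<and> ev t = None) \<and>
        (\<sigma> t \<notin> C (t - 1) \<and> card (C (t - 1)) < k \<longrightarrow>
           C t = insert (\<sigma> t) (C (t - 1)) \<and> ev t = None) \<and>
        (\<sigma> t \<notin> C (t - 1) \<and> k \<le> card (C (t - 1)) \<longrightarrow>
           (\<exists>p. ev t = Some p \<and> rl t = chosen_rule \<sigma> ev rl t \<and>
                rule_evicts (rl t) \<sigma> \<omega> (C (t - 1)) t p \<and>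
                C t = insert (\<sigma> t) (C (t - 1) - {p}))))"

end

theory Submission
  imports Defs
begin

text \<open>
  Every miss of AlternatingOracle is either the first request of a page or follows the most recent
  eviction of its page, and distinct misses follow distinct evictions. Along the evictions of a
  page the rules cycle BlindOracle, RandomAlg, Corrector, so the misses following RandomAlg or
  Corrector evictions inject into those following BlindOracle or RandomAlg evictions. Hence
  misses \<le> pages + 3 B, where B counts BlindOracle evictions of pages that are requested again.

  To bound B, take as potential the optimal number of misses on the remaining requests from the
  current cache plus the number of uncached pages still to be requested. By Belady's exchange
  argument an eviction costs the optimum nothing if it evicts the page requested farthest in the
  future, and at most one miss otherwise; so B + pages \<le> OPT + E, where E counts the
  BlindOracle evictions of returning pages that are not Belady's choice. Finally such an eviction
  means that a prediction overshot or undershot the true next request across the return time of the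
  evicted page, and these return times are distinct, so E \<le> \<eta>.
\<close>

definition cache_step :: "nat \<Rightarrow> 'a \<Rightarrow> 'a set \<Rightarrow> 'a set \<Rightarrow> bool" where
  "cache_step k x S S' \<longleftrightarrow>
     (card S < k \<and> S' = insert x S) \<or> (k \<le> card S \<and> (\<exists>p\<in>S. S' = insert x (S - {p})))"

lemma card_insert_remove:
  assumes "finite S" "x \<notin> S" "p \<in> S"
  shows "card (insert x (S - {p})) = card S"
proof -
  have "0 < card S" using assms(1,3) card_gt_0_iff by blast
  with assms show ?thesis by simp
qed

lemma cache_step_card:
  assumes "cache_step k x S S'" "finite S" "x \<notin> S"
  shows "finite S' \<and> card S' = (if card S < k then Suc (card S) else card S)"
  using assms card_insert_remove[OF assms(2,3)] by (auto simp: cache_step_def)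

lemma cache_step_finite:
  assumes "cache_step k x S S'" "finite S" "card S \<le> k" "x \<notin> S"
  shows "finite S'" "card S' \<le> k"
  using cache_step_card[OF assms(1,2,4)] assms(3) by auto

lemma cache_step_towards:
  assumes "x \<notin> S" "finite S" "card S \<le> k" "finite S'" "card S' \<le> k" "x \<in> S'"
  shows "\<exists>Sn. cache_step k x S Sn \<and> S' - Sn \<subseteq> S' - insert x S"
proof (cases "card S < k")
  case True
  then show ?thesis by (auto simp: cache_step_def)
next
  case False
  have "\<not> S \<subseteq> S'"
  proof
    assume "S \<subseteq> S'"
    with assms(1,6) have "S \<subset> S'" by auto
    with assms(4) have "card S < card S'" by (rule psubset_card_mono)
    with False assms(5) show False by simp
  qed
  then obtain p where "p \<in> S" "p \<notin> S'" by auto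
  with False show ?thesis by (auto simp: cache_step_def intro!: exI[of _ "insert x (S - {p})"])
qed

lemma cache_step_swap:
  assumes "cache_step k x (insert b U) S'" "x \<notin> insert a U" "x \<notin> insert b U"
    "a \<notin> U" "b \<notin> U" "finite U"
  shows "\<exists>Sa. cache_step k x (insert a U) Sa \<and>
    (Sa = S' \<or> (\<exists>V. a \<notin> V \<and> b \<notin> V \<and> Sa = insert a V \<and> S' = insert b V))"
proof -
  have card_eq: "card (insert a U) = card (insert b U)" using assms(4-6) by simp
  consider "card (insert b U) < k" "S' = insert x (insert b U)"
    | p where "k \<le> card (insert b U)" "p \<in> insert b U" "S' = insert x (insert b U - {p})"
    using assms(1) by (auto simp: cache_step_def)
  then show ?thesis
  proof cases
    case 1
    have "cache_step k x (insert a U) (insert a (insert x U))"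
      using 1 card_eq by (simp add: cache_step_def insert_commute)
    moreover have "S' = insert b (insert x U)" using 1 by auto
    moreover have "a \<notin> insert x U" "b \<notin> insert x U" using assms(2-5) by auto
    ultimately show ?thesis by metis
  next
    case (2 p)
    show ?thesis
    proof (cases "p = b")
      case True
      with 2 assms(4,5) have "S' = insert x (insert a U - {a})" by auto
      moreover have "cache_step k x (insert a U) (insert x (insert a U - {a}))"
        using 2 card_eq unfolding cache_step_def by (intro disjI2 conjI bexI[of _ a]) auto
      ultimately show ?thesis by blast
    next
      case False
      with 2 have p: "p \<in> U" by simp
      have "insert x (insert a U - {p}) = insert a (insert x (U - {p}))" using p assms(4) by auto
      moreover have "cache_step k x (insert a U) (insert x (insert a U - {p}))"
        using 2 card_eq p unfolding cache_step_def by (intro disjI2 conjI bexI[of _ p]) auto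
      moreover have "S' = insert b (insert x (U - {p}))" using 2 False by auto
      moreover have "a \<notin> insert x (U - {p})" "b \<notin> insert x (U - {p})" using assms(2-5) by auto
      ultimately show ?thesis by metis
    qed
  qed
qed

lemma card_insert_Diff_evict:
  assumes "finite R" "x \<notin> S" "p \<in> S"
  shows "card (insert x R - S) + of_bool (p \<in> R) = card (R - insert x (S - {p})) + 1"
proof -
  define A where "A = R - S - {x}"
  have "finite A" "x \<notin> A" "p \<notin> A" using assms unfolding A_def by auto
  moreover have "insert x R - S = insert x A" using assms(2) unfolding A_def by auto
  moreover have "R - insert x (S - {p}) = (if p \<in> R then insert p A else A)"
    using assms(2,3) unfolding A_def by auto
  ultimately show ?thesis by simp
qed

lemma feasible_run_step:
  assumes "feasible_run k \<sigma> T D" "t < T"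
  shows feasible_run_hit: "\<sigma> (Suc t) \<in> D t \<Longrightarrow> D (Suc t) = D t"
    and feasible_run_miss: "\<sigma> (Suc t) \<notin> D t \<Longrightarrow> cache_step k (\<sigma> (Suc t)) (D t) (D (Suc t))"
proof -
  have "Suc t \<in> {1..T}" using assms(2) by simp
  note step = assms(1)[unfolded feasible_run_def, THEN conjunct2, rule_format, OF this,
      unfolded diff_Suc_1]
  show "\<sigma> (Suc t) \<in> D t \<Longrightarrow> D (Suc t) = D t" using step by blast
  show "\<sigma> (Suc t) \<notin> D t \<Longrightarrow> cache_step k (\<sigma> (Suc t)) (D t) (D (Suc t))"
    using step unfolding cache_step_def by (metis not_le)
qed

lemma feasible_runI:
  assumes "D 0 = {}"
    and "\<And>t. t < T \<Longrightarrow> \<sigma> (Suc t) \<in> D t \<Longrightarrow> D (Suc t) = D t"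
    and "\<And>t. t < T \<Longrightarrow> \<sigma> (Suc t) \<notin> D t \<Longrightarrow> cache_step k (\<sigma> (Suc t)) (D t) (D (Suc t))"
  shows "feasible_run k \<sigma> T D"
  unfolding feasible_run_def
proof (rule conjI[OF assms(1)], rule ballI)
  fix t assume "t \<in> {1..T}"
  then obtain t' where t': "t = Suc t'" "t' < T" by (cases t) auto
  note hit = assms(2)[OF t'(2)] and miss = assms(3)[OF t'(2), unfolded cache_step_def]
  show "(\<sigma> t \<in> D (t - 1) \<longrightarrow> D t = D (t - 1)) \<and>
      (\<sigma> t \<notin> D (t - 1) \<and> card (D (t - 1)) < k \<longrightarrow> D t = insert (\<sigma> t) (D (t - 1))) \<and>
      (\<sigma> t \<notin> D (t - 1) \<and> k \<le> card (D (t - 1)) \<longrightarrow>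
        (\<exists>p\<in>D (t - 1). D t = insert (\<sigma> t) (D (t - 1) - {p})))"
    unfolding t'(1) diff_Suc_1 using hit miss by (metis not_le)
qed

lemma feasible_run_bounded:
  assumes "feasible_run k \<sigma> T D" "t \<le> T"
  shows "finite (D t) \<and> card (D t) \<le> k"
  using assms(2)
proof (induction t)
  case 0
  then show ?case using assms(1) by (simp add: feasible_run_def)
next
  case (Suc t)
  then have t: "t < T" and IH: "finite (D t)" "card (D t) \<le> k" by auto
  show ?case
  proof (cases "\<sigma> (Suc t) \<in> D t")
    case True
    with feasible_run_hit[OF assms(1) t] IH show ?thesis by simp
  next
    case False
    with cache_step_finite[OF feasible_run_miss[OF assms(1) t False] IH] show ?thesis by simp
  qed
qed

lemma feasible_run_card_mono:
  assumes "feasible_run k \<sigma> T D" "a \<le> b" "b \<le> T"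
  shows "card (D a) \<le> card (D b)"
  using assms(2,3)
proof (induction b rule: dec_induct)
  case (step t)
  then have t: "t < T" by simp
  have "card (D t) \<le> card (D (Suc t))"
  proof (cases "\<sigma> (Suc t) \<in> D t")
    case False
    have "finite (D t)" using feasible_run_bounded[OF assms(1)] t by simp
    with cache_step_card[OF feasible_run_miss[OF assms(1) t False]] False show ?thesis by simp
  qed (use feasible_run_hit[OF assms(1) t] in simp)
  with step show ?case by simp
qed simp

lemma feasible_run_requested:
  assumes "feasible_run k \<sigma> T D" "i \<in> {1..T}"
  shows "\<sigma> i \<in> D i"
proof -
  obtain t where t: "i = Suc t" "t < T" using assms(2) by (cases i) auto
  with feasible_run_hit[OF assms(1) t(2)] feasible_run_miss[OF assms(1) t(2)] show ?thesis
    by (cases "\<sigma> (Suc t) \<in> D t") (auto simp: cache_step_def)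
qed

lemma feasible_run_enters:
  assumes "feasible_run k \<sigma> T D" "y \<notin> D a" "y \<in> D b" "a \<le> b" "b \<le> T"
  shows "\<exists>s. a < s \<and> s \<le> b \<and> \<sigma> s = y"
  using assms(4,3,5)
proof (induction b rule: dec_induct)
  case base
  with assms(2) show ?case by simp
next
  case (step t)
  then have t: "t < T" by simp
  show ?case
  proof (cases "y \<in> D t")
    case True
    with step show ?thesis by (auto intro: le_SucI)
  next
    case False
    with step.prems feasible_run_hit[OF assms(1) t] feasible_run_miss[OF assms(1) t]
    have "\<sigma> (Suc t) = y"
      by (cases "\<sigma> (Suc t) \<in> D t") (auto simp: cache_step_def)
    with step.hyps show ?thesis by (intro exI[of _ "Suc t"]) simp
  qed
qed

section \<open>The offline optimum\<close>

text \<open>The least number of misses on requests t+1, ..., t+n when starting with cache S.\<close>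
fun opt_from :: "nat \<Rightarrow> (nat \<Rightarrow> 'a) \<Rightarrow> nat \<Rightarrow> nat \<Rightarrow> 'a set \<Rightarrow> nat" where
  "opt_from k \<sigma> t 0 S = 0"
| "opt_from k \<sigma> t (Suc n) S =
     (if \<sigma> (Suc t) \<in> S then opt_from k \<sigma> (Suc t) n S
      else if card S < k then Suc (opt_from k \<sigma> (Suc t) n (insert (\<sigma> (Suc t)) S))
      else Suc (Min ((\<lambda>p. opt_from k \<sigma> (Suc t) n (insert (\<sigma> (Suc t)) (S - {p}))) ` S)))"

lemma opt_from_hit: "\<sigma> (Suc t) \<in> S \<Longrightarrow> opt_from k \<sigma> t (Suc n) S = opt_from k \<sigma> (Suc t) n S"
  by simp

lemma opt_from_miss_le:
  assumes "0 < k" "\<sigma> (Suc t) \<notin> S" "cache_step k (\<sigma> (Suc t)) S S'"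
  shows "opt_from k \<sigma> t (Suc n) S \<le> Suc (opt_from k \<sigma> (Suc t) n S')"
proof (cases "card S < k")
  case True
  with assms show ?thesis by (auto simp: cache_step_def)
next
  case False
  then obtain p where "p \<in> S" "S' = insert (\<sigma> (Suc t)) (S - {p})"
    using assms(3) by (auto simp: cache_step_def)
  moreover have "finite S" using False assms(1) card.infinite by fastforce
  ultimately show ?thesis using False assms(2) by (auto intro!: Min_le)
qed

lemma opt_from_miss_eq:
  assumes "0 < k" "\<sigma> (Suc t) \<notin> S"
  obtains S' where "cache_step k (\<sigma> (Suc t)) S S'"
    "opt_from k \<sigma> t (Suc n) S = Suc (opt_from k \<sigma> (Suc t) n S')"
proof (cases "card S < k")
  case True
  with assms that show ?thesis by (auto simp: cache_step_def)
next
  case False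
  let ?f = "\<lambda>p. opt_from k \<sigma> (Suc t) n (insert (\<sigma> (Suc t)) (S - {p}))"
  have "finite S" "S \<noteq> {}" using False assms(1) card.infinite by fastforce+
  then have "Min (?f ` S) \<in> ?f ` S" by (intro Min_in) auto
  then obtain p where "p \<in> S" "Min (?f ` S) = ?f p" by auto
  with False assms that[of "insert (\<sigma> (Suc t)) (S - {p})"] show ?thesis
    by (auto simp: cache_step_def)
qed

lemma opt_from_next_state:
  assumes "0 < k" "finite S" "card S \<le> k"
  obtains S' where "\<sigma> (Suc t) \<in> S'" "S' \<subseteq> insert (\<sigma> (Suc t)) S" "finite S'" "card S' \<le> k"
    "opt_from k \<sigma> t (Suc n) S = of_bool (\<sigma> (Suc t) \<notin> S) + opt_from k \<sigma> (Suc t) n S'"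
proof (cases "\<sigma> (Suc t) \<in> S")
  case True
  with assms that[of S] show ?thesis by auto
next
  case False
  obtain S' where S': "cache_step k (\<sigma> (Suc t)) S S'"
    "opt_from k \<sigma> t (Suc n) S = Suc (opt_from k \<sigma> (Suc t) n S')"
    using assms(1) False by (rule opt_from_miss_eq)
  with False cache_step_finite[OF S'(1) assms(2,3) False] that[of S'] show ?thesis
    by (auto simp: cache_step_def)
qed

lemma opt_from_cache_diff:
  assumes "0 < k" "finite S" "finite S'" "card S \<le> k" "card S' \<le> k"
  shows "opt_from k \<sigma> t n S \<le> opt_from k \<sigma> t n S' + card (S' - S)"
  using assms(2-)
proof (induction n arbitrary: t S S')
  case (Suc n)
  let ?x = "\<sigma> (Suc t)" and ?opt = "opt_from k \<sigma> (Suc t) n"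
  obtain S'' where S'': "?x \<in> S''" "S'' \<subseteq> insert ?x S'" "finite S''" "card S'' \<le> k"
    and opt_S': "opt_from k \<sigma> t (Suc n) S' = of_bool (?x \<notin> S') + ?opt S''"
    using opt_from_next_state[OF assms(1) Suc.prems(2,4)] .
  show ?case
  proof (cases "?x \<in> S")
    case True
    have "card (S'' - S) \<le> card (S' - S)"
      using S''(2) True Suc.prems(2) by (intro card_mono) auto
    moreover have "?opt S \<le> ?opt S'' + card (S'' - S)" using Suc.IH Suc.prems S''(3,4) by blast
    ultimately show ?thesis using opt_S' opt_from_hit[of \<sigma> t S, OF True] by simp
  next
    case False
    obtain Sn where Sn: "cache_step k ?x S Sn" "S'' - Sn \<subseteq> S'' - insert ?x S"
      using cache_step_towards[OF False Suc.prems(1,3) S''(3,4,1)] by blast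
    have Sn_bound: "finite Sn" "card Sn \<le> k"
      using cache_step_finite[OF Sn(1) Suc.prems(1,3) False] by auto
    have "card (S'' - Sn) \<le> card (S' - S - {?x})"
      using Sn(2) S''(2) Suc.prems(2) by (intro card_mono) auto
    moreover have "card (S' - S - {?x}) + of_bool (?x \<in> S') = card (S' - S)"
    proof (cases "?x \<in> S'")
      case True
      then have "0 < card (S' - S)" using False Suc.prems(2) card_gt_0_iff by blast
      with True False Suc.prems(2) show ?thesis by simp
    qed simp
    moreover have "opt_from k \<sigma> t (Suc n) S \<le> Suc (?opt Sn)"
      using False Sn(1) by (rule opt_from_miss_le[OF assms(1)])
    moreover have "?opt Sn \<le> ?opt S'' + card (S'' - Sn)"
      using Suc.IH Sn_bound S''(3,4) by blast
    ultimately show ?thesis using opt_S' by (simp split: if_splits)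
  qed
qed simp

definition req_precedes :: "(nat \<Rightarrow> 'a) \<Rightarrow> nat \<Rightarrow> nat \<Rightarrow> 'a \<Rightarrow> 'a \<Rightarrow> bool" where
  "req_precedes \<sigma> t n a b \<longleftrightarrow>
     (\<forall>s. t < s \<and> s \<le> t + n \<and> \<sigma> s = b \<longrightarrow> (\<exists>s'. t < s' \<and> s' \<le> s \<and> \<sigma> s' = a))"

lemma req_precedes_Suc:
  assumes "req_precedes \<sigma> t (Suc n) a b" "\<sigma> (Suc t) \<noteq> a"
  shows "req_precedes \<sigma> (Suc t) n a b"
  unfolding req_precedes_def
proof (intro allI impI)
  fix s assume "Suc t < s \<and> s \<le> Suc t + n \<and> \<sigma> s = b"
  then have "t < s \<and> s \<le> t + Suc n \<and> \<sigma> s = b" by simp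
  then obtain s' where "t < s'" "s' \<le> s" "\<sigma> s' = a"
    using assms(1) unfolding req_precedes_def by blast
  moreover have "s' \<noteq> Suc t" using assms(2) \<open>\<sigma> s' = a\<close> by blast
  ultimately show "\<exists>s'. Suc t < s' \<and> s' \<le> s \<and> \<sigma> s' = a" by (auto intro!: exI[of _ s'])
qed

lemma req_precedes_not_next:
  assumes "req_precedes \<sigma> t (Suc n) a b" "a \<noteq> b"
  shows "\<sigma> (Suc t) \<noteq> b"
proof
  assume "\<sigma> (Suc t) = b"
  then obtain s' where "t < s'" "s' \<le> Suc t" "\<sigma> s' = a"
    using assms(1) unfolding req_precedes_def by fastforce
  then have "s' = Suc t" by simp
  with \<open>\<sigma> s' = a\<close> \<open>\<sigma> (Suc t) = b\<close> assms(2) show False by simp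
qed

lemma opt_from_keep_requested:
  assumes "0 < k" "a \<noteq> b" "a \<notin> U" "b \<notin> U" "finite U" "card (insert a U) \<le> k"
    "\<sigma> (Suc t) = a"
  shows "opt_from k \<sigma> t (Suc n) (insert a U) \<le> opt_from k \<sigma> t (Suc n) (insert b U)"
proof -
  let ?opt = "opt_from k \<sigma> (Suc t) n"
  have "card (insert b U) \<le> k" using assms(3-6) by simp
  then obtain S' where S': "a \<in> S'" "S' \<subseteq> insert a (insert b U)" "finite S'" "card S' \<le> k"
    and opt_b: "opt_from k \<sigma> t (Suc n) (insert b U) = of_bool (a \<notin> insert b U) + ?opt S'"
    using opt_from_next_state[OF assms(1)] assms(5,7) by (metis finite_insert)
  have "card (S' - insert a U) \<le> card {b}"
    using S'(1,2) by (intro card_mono) auto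
  moreover have "?opt (insert a U) \<le> ?opt S' + card (S' - insert a U)"
    by (rule opt_from_cache_diff[OF assms(1)]) (use S'(3,4) assms(5,6) in auto)
  ultimately show ?thesis using opt_b assms(2,3,7) by simp
qed

lemma opt_from_exchange:
  assumes "0 < k" "a \<noteq> b" "a \<notin> U" "b \<notin> U" "finite U" "card (insert a U) \<le> k"
    "req_precedes \<sigma> t n a b"
  shows "opt_from k \<sigma> t n (insert a U) \<le> opt_from k \<sigma> t n (insert b U)"
  using assms(3-)
proof (induction n arbitrary: t U)
  case (Suc n)
  let ?x = "\<sigma> (Suc t)" and ?opt = "opt_from k \<sigma> (Suc t) n"
  show ?case
  proof (cases "?x = a")
    case True
    with opt_from_keep_requested[OF assms(1,2) Suc.prems(1-4)] show ?thesis by blast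
  next
    case False
    have prec: "req_precedes \<sigma> (Suc t) n a b"
      using Suc.prems(5) False by (rule req_precedes_Suc)
    have "?x \<noteq> b" using Suc.prems(5) assms(2) by (rule req_precedes_not_next)
    show ?thesis
    proof (cases "?x \<in> U")
      case True
      then show ?thesis using Suc.IH[OF Suc.prems(1-4) prec] by simp
    next
      case x_notin: False
      obtain S' where S': "cache_step k ?x (insert b U) S'"
        "opt_from k \<sigma> t (Suc n) (insert b U) = Suc (?opt S')"
        using opt_from_miss_eq[where S = "insert b U" and t = t and n = n, OF assms(1)]
          x_notin \<open>?x \<noteq> b\<close> by auto
      obtain Sa where Sa: "cache_step k ?x (insert a U) Sa"
        "Sa = S' \<or> (\<exists>V. a \<notin> V \<and> b \<notin> V \<and> Sa = insert a V \<and> S' = insert b V)"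
        using cache_step_swap[OF S'(1)] x_notin False \<open>?x \<noteq> b\<close> Suc.prems(1-3) by auto
      have Sa_bound: "finite Sa" "card Sa \<le> k"
        using cache_step_finite[OF Sa(1)] Suc.prems x_notin False by auto
      have "?opt Sa \<le> ?opt S'"
        using Sa(2)
      proof
        assume "\<exists>V. a \<notin> V \<and> b \<notin> V \<and> Sa = insert a V \<and> S' = insert b V"
        then obtain V where V: "a \<notin> V" "b \<notin> V" "Sa = insert a V" "S' = insert b V" by blast
        with Sa_bound have "finite V" "card (insert a V) \<le> k" by auto
        with Suc.IH[OF V(1,2) _ _ prec] V(3,4) show ?thesis by simp
      qed simp
      moreover have "opt_from k \<sigma> t (Suc n) (insert a U) \<le> Suc (?opt Sa)"
        using x_notin False Sa(1) by (intro opt_from_miss_le[OF assms(1)]) simp_all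
      ultimately show ?thesis using S'(2) by simp
    qed
  qed
qed simp

lemma opt_from_evict_any:
  assumes "0 < k" "finite S" "card S = k" "x \<notin> S" "p \<in> S" "cache_step k x S S'"
  shows "opt_from k \<sigma> t n (insert x (S - {p})) \<le> opt_from k \<sigma> t n S' + 1"
proof -
  have bound: "card S \<le> k" using assms(3) by simp
  have "opt_from k \<sigma> t n (insert x (S - {p})) \<le> opt_from k \<sigma> t n S' + card (S' - insert x (S - {p}))"
  proof (rule opt_from_cache_diff[OF assms(1)])
    show "finite (insert x (S - {p}))" "card (insert x (S - {p})) \<le> k"
      using card_insert_remove[OF assms(2,4,5)] assms(2,3) by auto
    show "finite S'" "card S' \<le> k" using cache_step_finite[OF assms(6,2) bound assms(4)] by auto
  qed
  moreover have "card (S' - insert x (S - {p})) \<le> card {p}"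
    using assms(6) by (intro card_mono) (auto simp: cache_step_def)
  ultimately show ?thesis by simp
qed

lemma opt_from_evict_farthest:
  assumes "0 < k" "finite S" "card S \<le> k" "x \<notin> S" "p \<in> S" "m \<in> S" "req_precedes \<sigma> t n m p"
  shows "opt_from k \<sigma> t n (insert x (S - {p})) \<le> opt_from k \<sigma> t n (insert x (S - {m}))"
proof (cases "m = p")
  case False
  let ?U = "insert x (S - {p, m})"
  have eqs: "insert x (S - {p}) = insert m ?U" "insert x (S - {m}) = insert p ?U"
    using assms(5,6) False by auto
  have U: "m \<notin> ?U" "p \<notin> ?U" "finite ?U" using assms(2,4-6) by auto
  have "card (insert m ?U) \<le> k"
    using eqs(1) card_insert_remove[OF assms(2,4,5)] assms(3) by simp
  from opt_from_exchange[OF assms(1) False U this assms(7)] eqs show ?thesis by simp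
qed simp

lemma opt_from_evict:
  assumes "0 < k" "finite S" "card S = k" "\<sigma> (Suc t) \<notin> S" "p \<in> S"
  shows "opt_from k \<sigma> (Suc t) n (insert (\<sigma> (Suc t)) (S - {p}))
      + of_bool (\<forall>q\<in>S. req_precedes \<sigma> (Suc t) n q p)
    \<le> opt_from k \<sigma> t (Suc n) S"
proof -
  let ?x = "\<sigma> (Suc t)" and ?opt = "opt_from k \<sigma> (Suc t) n"
  obtain m where m: "m \<in> S" and opt_S: "opt_from k \<sigma> t (Suc n) S = Suc (?opt (insert ?x (S - {m})))"
    using opt_from_miss_eq[where \<sigma> = \<sigma> and S = S and t = t and n = n, OF assms(1,4)] assms(3)
    by (auto simp: cache_step_def)
  show ?thesis
  proof (cases "\<forall>q\<in>S. req_precedes \<sigma> (Suc t) n q p")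
    case True
    with m assms(3) have le: "?opt (insert ?x (S - {p})) \<le> ?opt (insert ?x (S - {m}))"
      by (intro opt_from_evict_farthest[OF assms(1,2) _ assms(4,5) m]) auto
    from True have one: "of_bool (\<forall>q\<in>S. req_precedes \<sigma> (Suc t) n q p) = (1::nat)" by simp
    from le show ?thesis unfolding opt_S one by simp
  next
    case False
    from m assms(3) have le: "?opt (insert ?x (S - {p})) \<le> ?opt (insert ?x (S - {m})) + 1"
      by (intro opt_from_evict_any[OF assms(1-5)]) (auto simp: cache_step_def)
    from False have zero: "of_bool (\<forall>q\<in>S. req_precedes \<sigma> (Suc t) n q p) = (0::nat)" by simp
    from le show ?thesis unfolding opt_S zero by simp
  qed
qed

lemma card_Ioc_filter_Suc:
  assumes "t < T"
  shows "card {s \<in> {t<..T}. P s} = of_bool (P (Suc t)) + card {s \<in> {Suc t<..T}. P s}"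
proof (cases "P (Suc t)")
  case True
  with assms have "{s \<in> {t<..T}. P s} = insert (Suc t) {s \<in> {Suc t<..T}. P s}" by auto
  with True show ?thesis by simp
next
  case False
  then have "{s \<in> {t<..T}. P s} = {s \<in> {Suc t<..T}. P s}" by (auto intro: Suc_lessI)
  with False show ?thesis by simp
qed

lemma opt_from_le_misses:
  assumes "0 < k" "feasible_run k \<sigma> T D" "t + n \<le> T"
  shows "opt_from k \<sigma> t n (D t) \<le> card {s \<in> {t<..t + n}. \<sigma> s \<notin> D (s - 1)}"
  using assms(3)
proof (induction n arbitrary: t)
  case (Suc n)
  then have t: "t < T" by simp
  have split: "card {s \<in> {t<..t + Suc n}. \<sigma> s \<notin> D (s - 1)} =
      of_bool (\<sigma> (Suc t) \<notin> D t) + card {s \<in> {Suc t<..Suc t + n}. \<sigma> s \<notin> D (s - 1)}"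
    using card_Ioc_filter_Suc[of t "t + Suc n"] by simp
  have IH: "opt_from k \<sigma> (Suc t) n (D (Suc t)) \<le> card {s \<in> {Suc t<..Suc t + n}. \<sigma> s \<notin> D (s - 1)}"
    using Suc.IH[of "Suc t"] Suc.prems by simp
  show ?case
  proof (cases "\<sigma> (Suc t) \<in> D t")
    case True
    with feasible_run_hit[OF assms(2) t] IH split show ?thesis by simp
  next
    case False
    with feasible_run_miss[OF assms(2) t]
    have "opt_from k \<sigma> t (Suc n) (D t) \<le> Suc (opt_from k \<sigma> (Suc t) n (D (Suc t)))"
      by (intro opt_from_miss_le[OF assms(1)])
    with IH split False show ?thesis by simp
  qed
qed simp

lemma opt_from_le_OPT:
  assumes "0 < k" "feasible_run k \<sigma> T D"
  shows "opt_from k \<sigma> 0 T {} \<le> OPT k \<sigma> T"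
proof -
  have "\<exists>D. feasible_run k \<sigma> T D \<and> misses \<sigma> T D = OPT k \<sigma> T"
    unfolding OPT_def by (rule LeastI_ex) (use assms(2) in blast)
  then obtain D' where D': "feasible_run k \<sigma> T D'" "misses \<sigma> T D' = OPT k \<sigma> T" by blast
  have "{s \<in> {0<..0 + T}. \<sigma> s \<notin> D' (s - 1)} = {t \<in> {1..T}. \<sigma> t \<notin> D' (t - 1)}" by auto
  with opt_from_le_misses[OF assms(1) D'(1), of 0 T] D' show ?thesis
    by (simp add: misses_def feasible_run_def)
qed

lemma last_req_spec:
  assumes "s \<in> {1..t}" "\<sigma> s = y"
  shows "last_req \<sigma> t y \<in> {1..t}" "\<sigma> (last_req \<sigma> t y) = y"
    "\<And>s'. last_req \<sigma> t y < s' \<Longrightarrow> s' \<le> t \<Longrightarrow> \<sigma> s' \<noteq> y"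
proof -
  let ?A = "{i \<in> {1..t}. \<sigma> i = y}"
  have A: "finite ?A" "s \<in> ?A" using assms by auto
  then have "Max ?A \<in> ?A" by (intro Max_in) auto
  then show "last_req \<sigma> t y \<in> {1..t}" "\<sigma> (last_req \<sigma> t y) = y"
    unfolding last_req_def by auto
  fix s' assume s': "last_req \<sigma> t y < s'" "s' \<le> t"
  show "\<sigma> s' \<noteq> y"
  proof
    assume "\<sigma> s' = y"
    with s' have "s' \<in> ?A" by simp
    then have "s' \<le> Max ?A" by (rule Max_ge[OF A(1)])
    with s'(1) show False unfolding last_req_def by simp
  qed
qed

lemma next_req_eqI:
  assumes "i < u" "u \<le> T" "\<sigma> u = \<sigma> i" "\<And>s. i < s \<Longrightarrow> s < u \<Longrightarrow> \<sigma> s \<noteq> \<sigma> i"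
  shows "next_req \<sigma> T i = u"
proof -
  have "(LEAST s. i < s \<and> s \<le> T \<and> \<sigma> s = \<sigma> i) = u"
    using assms by (intro Least_equality) (auto simp: not_le[symmetric])
  with assms(1-3) show ?thesis unfolding next_req_def by auto
qed

lemma next_req_gtI:
  assumes "u \<le> T" "\<And>s. i < s \<Longrightarrow> s \<le> u \<Longrightarrow> \<sigma> s \<noteq> \<sigma> i"
  shows "u < next_req \<sigma> T i"
proof (cases "\<exists>s. i < s \<and> s \<le> T \<and> \<sigma> s = \<sigma> i")
  case True
  let ?l = "LEAST s. i < s \<and> s \<le> T \<and> \<sigma> s = \<sigma> i"
  have "i < ?l \<and> ?l \<le> T \<and> \<sigma> ?l = \<sigma> i" using LeastI_ex[OF True] .
  with assms(2) have "u < ?l" by (meson not_le)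
  with True show ?thesis unfolding next_req_def by simp
next
  case False
  then have "next_req \<sigma> T i = T + 1" unfolding next_req_def by (simp only: if_False)
  with assms(1) show ?thesis by simp
qed

lemma card_first_requests_le:
  fixes \<sigma> :: "nat \<Rightarrow> 'a"
  shows "card {t \<in> {1..T}. \<not> (\<exists>i\<in>{1..<t}. \<sigma> i = \<sigma> t)} \<le> card (\<sigma> ` {0<..T})"
proof -
  let ?F = "{t \<in> {1..T}. \<not> (\<exists>i\<in>{1..<t}. \<sigma> i = \<sigma> t)}"
  have "inj_on \<sigma> ?F"
  proof (rule inj_onI)
    fix t1 t2 assume t: "t1 \<in> ?F" "t2 \<in> ?F" "\<sigma> t1 = \<sigma> t2"
    show "t1 = t2"
    proof (rule linorder_cases[of t1 t2])
      assume "t1 < t2"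
      with t show ?thesis by auto
    next
      assume "t2 < t1"
      with t show ?thesis by auto
    qed
  qed
  then have "card ?F = card (\<sigma> ` ?F)" by (simp add: card_image)
  also have "\<dots> \<le> card (\<sigma> ` {0<..T})" by (intro card_mono) auto
  finally show ?thesis .
qed

lemma rule_evicts_cached: "rule_evicts r \<sigma> \<omega> S t p \<Longrightarrow> p \<in> S"
  by (cases r) (auto simp: blind_evicts_def corrector_evicts_def Let_def split: if_splits)

locale alternating_oracle_run =
  fixes k T :: nat and \<sigma> :: "nat \<Rightarrow> 'a" and \<omega> :: "nat \<Rightarrow> nat"
    and C :: "nat \<Rightarrow> 'a set" and ev :: "nat \<Rightarrow> 'a option" and rl :: "nat \<Rightarrow> rule"
  assumes k_pos: "0 < k" and run: "alt_oracle_run k \<sigma> \<omega> T C ev rl"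
begin

lemma C_0: "C 0 = {}"
  using run by (simp add: alt_oracle_run_def)

lemma run_step_cases:
  assumes "t < T"
  obtains (hit) "\<sigma> (Suc t) \<in> C t" "C (Suc t) = C t" "ev (Suc t) = None"
  | (fill) "\<sigma> (Suc t) \<notin> C t" "card (C t) < k" "C (Suc t) = insert (\<sigma> (Suc t)) (C t)"
      "ev (Suc t) = None"
  | (evict) p where "\<sigma> (Suc t) \<notin> C t" "k \<le> card (C t)" "ev (Suc t) = Some p"
      "rl (Suc t) = chosen_rule \<sigma> ev rl (Suc t)" "rule_evicts (rl (Suc t)) \<sigma> \<omega> (C t) (Suc t) p"
      "p \<in> C t" "C (Suc t) = insert (\<sigma> (Suc t)) (C t - {p})"
proof -
  have "Suc t \<in> {1..T}" using assms by simp
  note step = run[unfolded alt_oracle_run_def, THEN conjunct2, rule_format, OF this,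
      unfolded diff_Suc_1]
  consider "\<sigma> (Suc t) \<in> C t" | "\<sigma> (Suc t) \<notin> C t" "card (C t) < k"
    | "\<sigma> (Suc t) \<notin> C t" "k \<le> card (C t)" by linarith
  then show thesis
  proof cases
    case 1
    with step hit show thesis by blast
  next
    case 2
    with step fill show thesis by blast
  next
    case 3
    with step obtain p where p: "ev (Suc t) = Some p" "rl (Suc t) = chosen_rule \<sigma> ev rl (Suc t)"
      "rule_evicts (rl (Suc t)) \<sigma> \<omega> (C t) (Suc t) p" "C (Suc t) = insert (\<sigma> (Suc t)) (C t - {p})"
      by auto
    show thesis by (rule evict[OF 3 p(1-3) rule_evicts_cached[OF p(3)] p(4)])
  qed
qed

lemma feasible: "feasible_run k \<sigma> T C"
proof (rule feasible_runI)
  show "C 0 = {}" by (rule C_0)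
next
  fix t assume "t < T" "\<sigma> (Suc t) \<in> C t"
  then show "C (Suc t) = C t" by (cases rule: run_step_cases) auto
next
  fix t assume "t < T" and miss: "\<sigma> (Suc t) \<notin> C t"
  then show "cache_step k (\<sigma> (Suc t)) (C t) (C (Suc t))"
    by (cases rule: run_step_cases) (use miss in \<open>auto simp: cache_step_def\<close>)
qed

lemma cache_bounded: "t \<le> T \<Longrightarrow> finite (C t) \<and> card (C t) \<le> k"
  by (rule feasible_run_bounded[OF feasible])

lemma eviction_step:
  assumes "ev e = Some p" "0 < e" "e \<le> T"
  shows "\<sigma> e \<notin> C (e - 1)" "k \<le> card (C (e - 1))" "rl e = chosen_rule \<sigma> ev rl e"
    "rule_evicts (rl e) \<sigma> \<omega> (C (e - 1)) e p" "p \<in> C (e - 1)"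
    "C e = insert (\<sigma> e) (C (e - 1) - {p})"
proof -
  obtain t where t: "e = Suc t" "t < T" using assms(2,3) by (cases e) auto
  show "\<sigma> e \<notin> C (e - 1)" "k \<le> card (C (e - 1))" "rl e = chosen_rule \<sigma> ev rl e"
    "rule_evicts (rl e) \<sigma> \<omega> (C (e - 1)) e p" "p \<in> C (e - 1)"
    "C e = insert (\<sigma> e) (C (e - 1) - {p})"
    by (cases rule: run_step_cases[OF t(2)]; use assms(1) t in simp)+
qed

lemma cache_leave_evicted:
  assumes "y \<in> C a" "y \<notin> C b" "a \<le> b" "b \<le> T"
  shows "\<exists>e. a < e \<and> e \<le> b \<and> ev e = Some y"
  using assms(3,2,4)
proof (induction b rule: dec_induct)
  case base
  with assms(1) show ?case by simp
next
  case (step t)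
  then have t: "t < T" by simp
  show ?case
  proof (cases "y \<in> C t")
    case True
    with step.prems have "ev (Suc t) = Some y"
      by (cases rule: run_step_cases[OF t]) auto
    with step.hyps show ?thesis by (intro exI[of _ "Suc t"]) simp
  next
    case False
    with step show ?thesis by (auto intro: le_SucI)
  qed
qed

lemma cached_requested:
  assumes "t \<le> T" "y \<in> C t"
  shows "\<exists>s\<in>{1..t}. \<sigma> s = y"
  using feasible_run_enters[OF feasible _ assms(2) _ assms(1)] C_0 by fastforce

subsection \<open>The potential\<close>

definition returns :: "nat \<Rightarrow> 'a \<Rightarrow> bool" where
  "returns e p \<longleftrightarrow> (\<exists>s. e < s \<and> s \<le> T \<and> \<sigma> s = p)"

definition evicts_farthest :: "nat \<Rightarrow> 'a \<Rightarrow> bool" where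
  "evicts_farthest e p \<longleftrightarrow> (\<forall>q\<in>C (e - 1). req_precedes \<sigma> e (T - e) q p)"

definition blind_return :: "nat \<Rightarrow> bool" where
  "blind_return e \<longleftrightarrow> (\<exists>p. ev e = Some p \<and> rl e = BlindOracle \<and> returns e p)"

definition blind_error :: "nat \<Rightarrow> bool" where
  "blind_error e \<longleftrightarrow>
     (\<exists>p. ev e = Some p \<and> rl e = BlindOracle \<and> returns e p \<and> \<not> evicts_farthest e p)"

text \<open>The potential at time t is the offline optimum from C t plus the number of uncached pages
  still to be requested; a BlindOracle eviction of a returning page decreases it unless it is
  an error.\<close>
lemma potential_step:
  assumes "t < T"
  shows "of_bool (blind_return (Suc t)) + card (\<sigma> ` {t<..T} - C t)
      + opt_from k \<sigma> (Suc t) (T - Suc t) (C (Suc t))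
    \<le> opt_from k \<sigma> t (T - t) (C t) + of_bool (blind_error (Suc t))
      + card (\<sigma> ` {Suc t<..T} - C (Suc t))"
proof -
  define n where "n = T - Suc t"
  let ?x = "\<sigma> (Suc t)" and ?R = "\<sigma> ` {Suc t<..T}" and ?opt = "opt_from k \<sigma> (Suc t) n"
  have Tt: "T - t = Suc n" using assms unfolding n_def by simp
  have "{t<..T} = insert (Suc t) {Suc t<..T}" using assms by auto
  then have R: "\<sigma> ` {t<..T} = insert ?x ?R" by simp
  have C_t: "finite (C t)" "card (C t) \<le> k" using cache_bounded assms by auto
  show ?thesis
  proof (cases rule: run_step_cases[OF assms, case_names hit fill evict])
    case hit
    then have "\<not> blind_return (Suc t)" by (simp add: blind_return_def)
    with hit R Tt show ?thesis by (simp add: n_def)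
  next
    case fill
    have "insert ?x ?R - C t = insert ?x (?R - C t)" "?R - C (Suc t) = ?R - C t - {?x}"
      using fill(1,3) by auto
    then have "card (insert ?x ?R - C t) = Suc (card (?R - C (Suc t)))"
      by (metis card.insert_remove finite_Diff finite_imageI finite_greaterThanAtMost)
    moreover have "opt_from k \<sigma> t (Suc n) (C t) = Suc (?opt (C (Suc t)))"
      using fill(1-3) by simp
    moreover have "\<not> blind_return (Suc t)" using fill(4) by (simp add: blind_return_def)
    ultimately show ?thesis unfolding R Tt n_def[symmetric] by simp
  next
    case (evict p)
    have "card (C t) = k" using evict(2) C_t by simp
    from opt_from_evict[where \<sigma> = \<sigma>, OF k_pos C_t(1) this evict(1,6), of n] evict(7)
    have cost: "?opt (C (Suc t)) + of_bool (evicts_farthest (Suc t) p) \<le> opt_from k \<sigma> t (Suc n) (C t)"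
      unfolding evicts_farthest_def n_def by simp
    have "returns (Suc t) p \<longleftrightarrow> p \<in> ?R"
      unfolding returns_def by auto
    moreover have "\<not> returns (Suc t) p \<Longrightarrow> evicts_farthest (Suc t) p"
      using assms unfolding returns_def evicts_farthest_def req_precedes_def by force
    moreover have "card (insert ?x ?R - C t) + of_bool (p \<in> ?R) = card (?R - C (Suc t)) + 1"
      unfolding evict(7) by (rule card_insert_Diff_evict[OF _ evict(1,6)]) simp
    moreover have "blind_return (Suc t) \<longleftrightarrow> rl (Suc t) = BlindOracle \<and> returns (Suc t) p"
      "blind_error (Suc t) \<longleftrightarrow>
         rl (Suc t) = BlindOracle \<and> returns (Suc t) p \<and> \<not> evicts_farthest (Suc t) p"
      using evict(3) by (auto simp: blind_return_def blind_error_def)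
    ultimately show ?thesis
      using R Tt cost unfolding n_def[symmetric]
      by (cases "returns (Suc t) p"; cases "evicts_farthest (Suc t) p") auto
  qed
qed

lemma potential_bound:
  assumes "t \<le> T"
  shows "card {e \<in> {t<..T}. blind_return e} + card (\<sigma> ` {t<..T} - C t)
    \<le> opt_from k \<sigma> t (T - t) (C t) + card {e \<in> {t<..T}. blind_error e}"
  using assms
proof (induction t rule: inc_induct)
  case (step t)
  with potential_step[OF step.hyps(2)] card_Ioc_filter_Suc[OF step.hyps(2), of blind_return]
    card_Ioc_filter_Suc[OF step.hyps(2), of blind_error]
  show ?case by simp
qed simp

subsection \<open>Charging errors to the prediction error\<close>

definition return_time :: "nat \<Rightarrow> nat" where
  "return_time e = (LEAST s. e < s \<and> s \<le> T \<and> \<sigma> s = the (ev e))"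

lemma return_time_spec:
  assumes "ev e = Some p" "returns e p"
  shows "e < return_time e" "return_time e \<le> T" "\<sigma> (return_time e) = p"
    "\<And>s. e < s \<Longrightarrow> s \<le> T \<Longrightarrow> \<sigma> s = p \<Longrightarrow> return_time e \<le> s"
proof -
  have ex: "\<exists>s. e < s \<and> s \<le> T \<and> \<sigma> s = the (ev e)" using assms unfolding returns_def by simp
  show "e < return_time e" "return_time e \<le> T" "\<sigma> (return_time e) = p"
    using LeastI_ex[OF ex] assms(1) unfolding return_time_def by auto
  show "\<And>s. e < s \<Longrightarrow> s \<le> T \<Longrightarrow> \<sigma> s = p \<Longrightarrow> return_time e \<le> s"
    using assms(1) unfolding return_time_def by (auto intro: Least_le)
qed

text \<open>The request at time e is a miss, so it is not a request to y.\<close>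
lemma cached_last_req_gap:
  assumes "0 < e" "e \<le> T" "y \<in> C (e - 1)" "\<sigma> e \<notin> C (e - 1)"
    "\<And>s. e < s \<Longrightarrow> s < u \<Longrightarrow> \<sigma> s \<noteq> y"
  shows "last_req \<sigma> (e - 1) y \<in> {1..<e}" "\<sigma> (last_req \<sigma> (e - 1) y) = y"
    "\<And>s. last_req \<sigma> (e - 1) y < s \<Longrightarrow> s < u \<Longrightarrow> \<sigma> s \<noteq> y"
proof -
  have "e - 1 \<le> T" using assms(2) by simp
  then obtain s0 where "s0 \<in> {1..e - 1}" "\<sigma> s0 = y" using cached_requested assms(3) by blast
  note last = last_req_spec[where \<sigma> = \<sigma>, OF this]
  show "last_req \<sigma> (e - 1) y \<in> {1..<e}" using last(1) assms(1) by (simp, arith)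
  show "\<sigma> (last_req \<sigma> (e - 1) y) = y" by (rule last(2))
  fix s assume "last_req \<sigma> (e - 1) y < s" "s < u"
  then consider "s \<le> e - 1" | "s = e" | "e < s" by linarith
  then show "\<sigma> s \<noteq> y"
  proof cases
    case 1
    with last(3) \<open>last_req \<sigma> (e - 1) y < s\<close> show ?thesis by blast
  next
    case 2
    with assms(3,4) show ?thesis by blast
  next
    case 3
    with assms(5) \<open>s < u\<close> show ?thesis by blast
  qed
qed

definition error_window :: "nat \<Rightarrow> nat set" where
  "error_window i = {min (\<omega> i) (next_req \<sigma> T i) ..< max (\<omega> i) (next_req \<sigma> T i)}"

lemma sum_card_error_window: "int (\<Sum>i = 1..T. card (error_window i)) = pred_error \<sigma> \<omega> T"
  unfolding pred_error_def error_window_def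
  by (simp add: of_nat_sum) (rule sum.cong; auto simp: max_def min_def)

text \<open>BlindOracle evicted p although some cached q is requested after p's return u. If u is below
  the prediction for p's last request, that prediction overshoots; otherwise the prediction for
  q's last request, which is at most p's, undershoots. Either way u lies in an error window.\<close>
lemma blind_error_in_window:
  assumes "0 < e" "e \<le> T" "blind_error e"
  shows "\<exists>i\<in>{1..T}. return_time e \<in> error_window i"
proof -
  obtain p where p: "ev e = Some p" "rl e = BlindOracle" "returns e p" "\<not> evicts_farthest e p"
    using assms(3) unfolding blind_error_def by blast
  note evicted = eviction_step[OF p(1) assms(1,2)]
  let ?u = "return_time e"
  note u = return_time_spec[OF p(1,3)]
  obtain q s where q: "q \<in> C (e - 1)" "e < s" "s \<le> T" "\<sigma> s = p"
    "\<And>s'. e < s' \<Longrightarrow> s' \<le> s \<Longrightarrow> \<sigma> s' \<noteq> q"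
    using p(4) assms(2) unfolding evicts_farthest_def req_precedes_def by auto
  define ip where "ip = last_req \<sigma> (e - 1) p"
  define iq where "iq = last_req \<sigma> (e - 1) q"
  have "\<And>s'. e < s' \<Longrightarrow> s' < ?u \<Longrightarrow> \<sigma> s' \<noteq> p" using u(2,4) by fastforce
  note p_gap = cached_last_req_gap[where u = ?u, OF assms(1,2) evicted(5,1) this, folded ip_def]
  have "\<And>s'. e < s' \<Longrightarrow> s' < Suc ?u \<Longrightarrow> \<sigma> s' \<noteq> q" using q(5) u(4)[OF q(2-4)] by simp
  note q_gap = cached_last_req_gap[where u = "Suc ?u", OF assms(1,2) q(1) evicted(1) this,
      folded iq_def]
  have next_ip: "next_req \<sigma> T ip = ?u"
    using p_gap u(1-3) by (intro next_req_eqI) auto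
  have next_iq: "?u < next_req \<sigma> T iq"
    using q_gap u(2) by (intro next_req_gtI) auto
  have "\<omega> iq \<le> \<omega> ip"
    using evicted(4) p(2) q(1) unfolding ip_def iq_def by (simp add: blind_evicts_def)
  moreover have "ip \<in> {1..T}" "iq \<in> {1..T}" using p_gap(1) q_gap(1) assms(2) by auto
  ultimately show ?thesis
  proof (cases "?u < \<omega> ip")
    case True
    with next_ip have "?u \<in> error_window ip" unfolding error_window_def by simp
    with \<open>ip \<in> {1..T}\<close> show ?thesis by blast
  next
    case False
    with next_iq \<open>\<omega> iq \<le> \<omega> ip\<close> have "?u \<in> error_window iq" unfolding error_window_def by simp
    with \<open>iq \<in> {1..T}\<close> show ?thesis by blast
  qed
qed

lemma return_time_inj: "inj_on return_time {e \<in> {0<..T}. \<exists>p. ev e = Some p \<and> returns e p}"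
proof -
  have distinct: False if "e1 \<in> {0<..T}" "ev e1 = Some p1" "returns e1 p1"
    "e2 \<in> {0<..T}" "ev e2 = Some p2" "returns e2 p2"
    "return_time e1 = return_time e2" "e1 < e2" for e1 e2 p1 p2
  proof -
    note u1 = return_time_spec[OF that(2,3)] and u2 = return_time_spec[OF that(5,6)]
    have "p2 = p1" using u1(3) u2(3) that(7) by simp
    then have "p1 \<in> C (e2 - 1)" using eviction_step(5)[OF that(5)] that(4) by simp
    moreover have "p1 \<notin> C e1" using eviction_step(6)[OF that(2)] eviction_step(1,5)[OF that(2)] that(1)
      by auto
    moreover have "e1 \<le> e2 - 1" and e2: "e2 - 1 \<le> T" using that(4,8) by auto
    ultimately obtain s where s: "e1 < s" "s \<le> e2 - 1" "\<sigma> s = p1"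
      using feasible_run_enters[OF feasible] by blast
    with e2 have "return_time e1 \<le> s" by (intro u1(4)) simp_all
    with s(2) u2(1) that(7) show False by simp
  qed
  show ?thesis
  proof (rule inj_onI)
    fix e1 e2
    assume "e1 \<in> {e \<in> {0<..T}. \<exists>p. ev e = Some p \<and> returns e p}"
      "e2 \<in> {e \<in> {0<..T}. \<exists>p. ev e = Some p \<and> returns e p}"
      and same: "return_time e1 = return_time e2"
    then obtain p1 p2 where "e1 \<in> {0<..T}" "ev e1 = Some p1" "returns e1 p1"
      "e2 \<in> {0<..T}" "ev e2 = Some p2" "returns e2 p2" by blast
    with same distinct show "e1 = e2" by (metis nat_neq_iff)
  qed
qed

lemma card_blind_error_le: "int (card {e \<in> {0<..T}. blind_error e}) \<le> pred_error \<sigma> \<omega> T"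
proof -
  let ?W = "{e \<in> {0<..T}. blind_error e}"
  have "inj_on return_time ?W"
    by (rule inj_on_subset[OF return_time_inj]) (auto simp: blind_error_def)
  then have "card ?W = card (return_time ` ?W)" by (simp add: card_image)
  also have "\<dots> \<le> card (\<Union>i\<in>{1..T}. error_window i)"
    using blind_error_in_window by (intro card_mono) (auto simp: error_window_def)
  also have "\<dots> \<le> (\<Sum>i = 1..T. card (error_window i))" by (rule card_UN_le) simp
  finally show ?thesis using sum_card_error_window by linarith
qed

subsection \<open>Counting misses\<close>

definition prev_eviction :: "nat \<Rightarrow> nat" where
  "prev_eviction t = Max {e \<in> {1..<t}. ev e = Some (\<sigma> t)}"

definition repeat_miss :: "nat \<Rightarrow> bool" where
  "repeat_miss t \<longleftrightarrow> t \<in> {1..T} \<and> \<sigma> t \<notin> C (t - 1) \<and> (\<exists>i\<in>{1..<t}. \<sigma> i = \<sigma> t)"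

lemma repeat_miss_prev_eviction:
  assumes "repeat_miss t"
  shows "prev_eviction t \<in> {1..<t}" "ev (prev_eviction t) = Some (\<sigma> t)"
    "rl t = next_rule (rl (prev_eviction t))"
proof -
  obtain i where i: "i \<in> {1..<t}" "\<sigma> i = \<sigma> t" and t: "t \<in> {1..T}" "\<sigma> t \<notin> C (t - 1)"
    using assms unfolding repeat_miss_def by blast
  have "\<sigma> t \<in> C i" using feasible_run_requested[OF feasible] i t by fastforce
  moreover have "i \<le> t - 1" "t - 1 \<le> T" using i t by auto
  ultimately obtain e where e: "i < e" "e \<le> t - 1" "ev e = Some (\<sigma> t)"
    using cache_leave_evicted t(2) by blast
  let ?E = "{e \<in> {1..<t}. ev e = Some (\<sigma> t)}"
  have "e \<in> ?E" using e i by auto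
  then have "Max ?E \<in> ?E" by (intro Max_in) auto
  then show pe: "prev_eviction t \<in> {1..<t}" "ev (prev_eviction t) = Some (\<sigma> t)"
    unfolding prev_eviction_def by auto
  have "k \<le> card (C (e - 1))" using eviction_step(2)[OF e(3)] e i t by simp
  also have "\<dots> \<le> card (C (t - 1))"
    using e(2) t(1) by (intro feasible_run_card_mono[OF feasible]) auto
  finally have full: "k \<le> card (C (t - 1))" .
  obtain t' where t': "t = Suc t'" "t' < T" using t by (cases t) auto
  have "rl t = chosen_rule \<sigma> ev rl t"
    by (cases rule: run_step_cases[OF t'(2)]) (use t t' full in auto)
  with i show "rl t = next_rule (rl (prev_eviction t))"
    unfolding chosen_rule_def prev_eviction_def by auto
qed

lemma prev_eviction_inj: "inj_on prev_eviction {t. repeat_miss t}"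
proof -
  have distinct: False if "repeat_miss t1" "repeat_miss t2" "prev_eviction t1 = prev_eviction t2"
    "t1 < t2" for t1 t2
  proof -
    note pe1 = repeat_miss_prev_eviction[OF that(1)] and pe2 = repeat_miss_prev_eviction[OF that(2)]
    have "\<sigma> t1 = \<sigma> t2" using pe1(2) pe2(2) that(3) by simp
    moreover have t1: "t1 \<in> {1..T}" and t2: "t2 \<in> {1..T}" "\<sigma> t2 \<notin> C (t2 - 1)"
      using that(1,2) unfolding repeat_miss_def by auto
    ultimately have "\<sigma> t2 \<in> C t1" using feasible_run_requested[OF feasible t1] by simp
    moreover have "t1 \<le> t2 - 1" "t2 - 1 \<le> T" using that(4) t2 by auto
    ultimately obtain e where e: "t1 < e" "e \<le> t2 - 1" "ev e = Some (\<sigma> t2)"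
      using cache_leave_evicted t2(2) by blast
    then have "e \<le> prev_eviction t2"
      unfolding prev_eviction_def using t1 by (intro Max_ge) auto
    with e(1) pe1(1) that(3) show False by simp
  qed
  show ?thesis
    by (rule inj_onI) (use distinct in \<open>metis mem_Collect_eq nat_neq_iff\<close>)
qed

text \<open>The rules cycle: a miss whose page was last evicted by RandomAlg (Corrector) follows an
  eviction that was itself a repeated miss whose page was last evicted by BlindOracle (RandomAlg).\<close>
lemma prev_eviction_chain:
  assumes "repeat_miss t" "rl (prev_eviction t) = next_rule X" "X \<noteq> Corrector"
  shows "repeat_miss (prev_eviction t) \<and> rl (prev_eviction (prev_eviction t)) = X"
proof -
  let ?e = "prev_eviction t"
  note pe = repeat_miss_prev_eviction[OF assms(1)]
  have "t \<le> T" using assms(1) unfolding repeat_miss_def by simp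
  with pe have e: "0 < ?e" "?e \<le> T" by auto
  note evicted = eviction_step[OF pe(2) e]
  have "\<exists>i\<in>{1..<?e}. \<sigma> i = \<sigma> ?e"
  proof (rule ccontr)
    assume "\<not> ?thesis"
    then have "rl ?e = BlindOracle" using evicted(3) unfolding chosen_rule_def by simp
    with assms(2,3) show False by (cases X) auto
  qed
  with evicted(1) e have repeat: "repeat_miss ?e" unfolding repeat_miss_def by auto
  with assms(2) repeat_miss_prev_eviction(3)[OF repeat] have "next_rule X = next_rule (rl (prev_eviction ?e))"
    by simp
  then have "rl (prev_eviction ?e) = X" by (cases X; cases "rl (prev_eviction ?e)") auto
  with repeat show ?thesis by simp
qed

lemma card_repeat_misses_next:
  assumes "X \<noteq> Corrector"
  shows "card {t. repeat_miss t \<and> rl (prev_eviction t) = next_rule X}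
    \<le> card {t. repeat_miss t \<and> rl (prev_eviction t) = X}"
proof -
  let ?A = "{t. repeat_miss t \<and> rl (prev_eviction t) = next_rule X}"
  have "inj_on prev_eviction ?A" by (rule inj_on_subset[OF prev_eviction_inj]) auto
  then have "card ?A = card (prev_eviction ` ?A)" by (simp add: card_image)
  also have "\<dots> \<le> card {t. repeat_miss t \<and> rl (prev_eviction t) = X}"
  proof (rule card_mono)
    show "finite {t. repeat_miss t \<and> rl (prev_eviction t) = X}"
      by (rule finite_subset[of _ "{1..T}"]) (auto simp: repeat_miss_def)
  qed (use prev_eviction_chain assms in blast)
  finally show ?thesis .
qed

lemma card_repeat_misses_blind:
  "card {t. repeat_miss t \<and> rl (prev_eviction t) = BlindOracle} \<le> card {e \<in> {0<..T}. blind_return e}"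
proof -
  let ?A = "{t. repeat_miss t \<and> rl (prev_eviction t) = BlindOracle}"
  have "inj_on prev_eviction ?A" by (rule inj_on_subset[OF prev_eviction_inj]) auto
  then have "card ?A = card (prev_eviction ` ?A)" by (simp add: card_image)
  also have "\<dots> \<le> card {e \<in> {0<..T}. blind_return e}"
  proof (rule card_mono)
    show "prev_eviction ` ?A \<subseteq> {e \<in> {0<..T}. blind_return e}"
    proof clarify
      fix t assume t: "repeat_miss t" "rl (prev_eviction t) = BlindOracle"
      note pe = repeat_miss_prev_eviction[OF t(1)]
      have "t \<le> T" using t(1) by (simp add: repeat_miss_def)
      with pe t(2) show "prev_eviction t \<in> {0<..T} \<and> blind_return (prev_eviction t)"
        unfolding blind_return_def returns_def by auto
    qed
  qed simp
  finally show ?thesis .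
qed

lemma misses_bound: "misses \<sigma> T C \<le> card (\<sigma> ` {0<..T}) + 3 * card {e \<in> {0<..T}. blind_return e}"
proof -
  let ?F = "{t \<in> {1..T}. \<not> (\<exists>i\<in>{1..<t}. \<sigma> i = \<sigma> t)}"
  let ?N = "\<lambda>X. {t. repeat_miss t \<and> rl (prev_eviction t) = X}"
  have fin: "finite (?N X)" for X
    by (rule finite_subset[of _ "{1..T}"]) (auto simp: repeat_miss_def)
  have "{t \<in> {1..T}. \<sigma> t \<notin> C (t - 1)} \<subseteq> ?F \<union> (?N BlindOracle \<union> ?N RandomAlg \<union> ?N Corrector)"
    using rule.exhaust by (auto simp: repeat_miss_def)
  then have "misses \<sigma> T C \<le> card (?F \<union> (?N BlindOracle \<union> ?N RandomAlg \<union> ?N Corrector))"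
    unfolding misses_def using fin by (intro card_mono) auto
  also have "\<dots> \<le> card ?F + card (?N BlindOracle \<union> ?N RandomAlg \<union> ?N Corrector)"
    by (rule card_Un_le)
  also have "\<dots> \<le> card ?F + (card (?N BlindOracle) + card (?N RandomAlg) + card (?N Corrector))"
    using card_Un_le[of "?N BlindOracle \<union> ?N RandomAlg" "?N Corrector"]
      card_Un_le[of "?N BlindOracle" "?N RandomAlg"] by linarith
  finally show ?thesis
    using card_first_requests_le[of T \<sigma>] card_repeat_misses_blind
      card_repeat_misses_next[of BlindOracle] card_repeat_misses_next[of RandomAlg] by simp
qed

end

theorem mainTheorem13:
  fixes k T :: nat and \<sigma> :: "nat \<Rightarrow> 'a" and \<omega> :: "nat \<Rightarrow> nat"
    and C :: "nat \<Rightarrow> 'a set" and ev :: "nat \<Rightarrow> 'a option" and rl :: "nat \<Rightarrow> rule"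
  assumes "0 < k"
    and "alt_oracle_run k \<sigma> \<omega> T C ev rl"
  shows "int (misses \<sigma> T C) \<le> 3 * int (OPT k \<sigma> T) + 3 * pred_error \<sigma> \<omega> T"
proof -
  interpret alternating_oracle_run k T \<sigma> \<omega> C ev rl using assms by unfold_locales
  let ?returns = "card {e \<in> {0<..T}. blind_return e}"
  let ?errors = "card {e \<in> {0<..T}. blind_error e}"
  let ?pages = "card (\<sigma> ` {0<..T})"
  have "?returns + ?pages \<le> opt_from k \<sigma> 0 T {} + ?errors"
    using potential_bound[of 0] C_0 by simp
  moreover have "opt_from k \<sigma> 0 T {} \<le> OPT k \<sigma> T" by (rule opt_from_le_OPT[OF k_pos feasible])
  moreover have "misses \<sigma> T C \<le> ?pages + 3 * ?returns" by (rule misses_bound)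
  moreover have "int ?errors \<le> pred_error \<sigma> \<omega> T" by (rule card_blind_error_le)
  ultimately show ?thesis by linarith
qed

end
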